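(* Let $(Z,d)$ be an infinite compact metric space and $\psi:Z\to Z$ an expansive homeomorphism. Then there exist a compact zero-dimensional Hausdorff space $\mathcal P$, a homeomorphism $\sigma:\mathcal P\to\mathcal P$ and a continuous surjection $\pi:\mathcal P\to Z$ with $\pi\circ\sigma=\psi\circ\pi$, such that $\pi$ is injective on a dense $G_\delta$-subset of $\mathcal P$ (i.e. the set of $p\in\mathcal P$ with $\pi^{-1}(\pi(p))=\{p\}$ is a dense $G_\delta$), and such that $\mathcal P$ is a Cantor space whenever $Z$ has no isolated points.
   Context: A homeomorphism $\psi$ of a compact metric space $(Z,d)$ is expansive if there is $\varepsilon_Z>0$ such that $d(\psi^n(x),\psi^n(y))\le\varepsilon_Z$ for all $n\in\mathbb Z$ implies $x=y$. *)

theory Defs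
  imports "HOL-Analysis.Analysis"
begin

definition expansive :: "'a::metric_space set \<Rightarrow> ('a \<Rightarrow> 'a) \<Rightarrow> bool" where
  "expansive Z \<psi> \<longleftrightarrow>
     (\<exists>e>0. \<forall>x\<in>Z. \<forall>y\<in>Z.
        (\<forall>n::nat. dist ((\<psi> ^^ n) x) ((\<psi> ^^ n) y) \<le> e \<and>
                  dist ((inv_into Z \<psi> ^^ n) x) ((inv_into Z \<psi> ^^ n) y) \<le> e) \<longrightarrow> x = y)"

definition cantor_space :: "(nat \<Rightarrow> bool) topology" where
  "cantor_space = product_topology (\<lambda>_::nat. discrete_topology (UNIV::bool set)) UNIV"

end

theory Submission
  imports Defs
begin

text \<open>
  Choose a countable family \<open>\<U>\<close> of open subsets of \<open>Z\<close>, invariant under \<open>\<psi>\<close> and \<open>\<psi>\<inverse>\<close>,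
  such that any two points \<open>x \<noteq> y\<close> are separated by some \<open>U \<in> \<U>\<close> with \<open>x \<in> U\<close> and
  \<open>y \<notin> closure U\<close>. Code a point by the set of members of \<open>\<U>\<close> containing it, a
  point of the Cantor cube \<open>{0,1}\<^sup>\<U>\<close>. By Baire's theorem the points lying on no boundary
  \<open>closure U - U\<close> are dense; let \<open>P\<close> be the closure of their codes. A code
  \<open>p \<in> P\<close> determines exactly one point \<open>\<pi> p\<close>, lying in \<open>closure U\<close> for \<open>U \<in> p\<close> and outside
  \<open>U\<close> for \<open>U \<notin> p\<close>; the graph of \<open>\<pi>\<close> is closed, so \<open>\<pi>\<close> is continuous. The shift
  \<open>\<sigma> p = {U. \<psi>\<inverse> U \<in> p}\<close> is a homeomorphism of \<open>P\<close> with \<open>\<pi> \<circ> \<sigma> = \<psi> \<circ> \<pi>\<close>. Codes of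
  boundary-free points have singleton fibres, so the injectivity set is dense; it is a \<open>G\<^sub>\<delta>\<close>
  because \<open>\<pi>\<close> is a closed map and the cylinders form a countable separating family of
  clopen sets. The same family makes \<open>P\<close> zero-dimensional and, when \<open>Z\<close> is perfect, a Cantor
  space by Brouwer's characterisation.
\<close>

lemma continuous_map_to_discrete_bool:
  assumes "openin X {x \<in> topspace X. f x}" and "openin X {x \<in> topspace X. \<not> f x}"
  shows "continuous_map X (discrete_topology (UNIV::bool set)) f"
proof -
  have "openin X {x \<in> topspace X. f x \<in> U}" for U
  proof -
    have "{x \<in> topspace X. f x \<in> U} =
        (if True \<in> U then {x \<in> topspace X. f x} else {}) \<union>
        (if False \<in> U then {x \<in> topspace X. \<not> f x} else {})"
      by (cases "True \<in> U"; cases "False \<in> U"; auto; metis (full_types))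
    then show ?thesis using assms by auto
  qed
  then show ?thesis unfolding continuous_map_def by auto
qed

lemma continuous_map_closed_graph:
  assumes "compact_space Y" and "f \<in> topspace X \<rightarrow> topspace Y"
    and "closedin (prod_topology X Y) ((\<lambda>x. (x, f x)) ` topspace X)"
  shows "continuous_map X Y f"
  unfolding continuous_map_closedin
proof (intro conjI allI impI assms(2))
  fix C assume "closedin Y C"
  then have "closedin (prod_topology X Y) ((\<lambda>x. (x, f x)) ` topspace X \<inter> topspace X \<times> C)"
    using assms(3) by (intro closedin_Int) (auto simp: closedin_prod_Times_iff)
  then have "closedin X (fst ` ((\<lambda>x. (x, f x)) ` topspace X \<inter> topspace X \<times> C))"
    using closed_map_fst[OF assms(1)] unfolding closed_map_def by blast
  moreover have "fst ` ((\<lambda>x. (x, f x)) ` topspace X \<inter> topspace X \<times> C) = {x \<in> topspace X. f x \<in> C}"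
    by force
  ultimately show "closedin X {x \<in> topspace X. f x \<in> C}" by simp
qed

section \<open>Separating families of clopen sets\<close>

definition separating_clopens :: "'a topology \<Rightarrow> 'a set set \<Rightarrow> bool" where
  "separating_clopens X \<C> \<longleftrightarrow> (\<forall>C\<in>\<C>. openin X C \<and> closedin X C) \<and>
     (\<forall>x\<in>topspace X. \<forall>y\<in>topspace X. x \<noteq> y \<longrightarrow> (\<exists>C\<in>\<C>. (x \<in> C) \<noteq> (y \<in> C)))"

lemma separating_clopens_separates:
  "\<lbrakk>separating_clopens X \<C>; x \<in> topspace X; y \<in> topspace X; x \<noteq> y\<rbrakk>
    \<Longrightarrow> \<exists>C\<in>\<C>. (x \<in> C) \<noteq> (y \<in> C)"
  by (simp add: separating_clopens_def)

lemma separating_clopens_clopen: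
  "\<lbrakk>separating_clopens X \<C>; C \<in> \<C>\<rbrakk> \<Longrightarrow> openin X C \<and> closedin X C"
  by (simp add: separating_clopens_def)

lemma separating_clopensD:
  assumes "separating_clopens X \<C>" and "x \<in> topspace X" "y \<in> topspace X" "x \<noteq> y"
  obtains C where "openin X C" "closedin X C" "x \<in> C" "y \<notin> C"
proof -
  obtain C where C: "C \<in> \<C>" "(x \<in> C) \<noteq> (y \<in> C)"
    using separating_clopens_separates[OF assms] by blast
  have "openin X C" "closedin X C"
    using separating_clopens_clopen[OF assms(1) C(1)] by auto
  then show thesis
    using C(2) that[of C] that[of "topspace X - C"] assms(2,3) by (cases "x \<in> C") auto
qed

lemma Hausdorff_space_if_separating_clopens:
  assumes "separating_clopens X \<C>"
  shows "Hausdorff_space X"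
  unfolding Hausdorff_space_def
proof (intro allI impI)
  fix x y assume "x \<in> topspace X \<and> y \<in> topspace X \<and> x \<noteq> y"
  then obtain C where "openin X C" "closedin X C" "x \<in> C" "y \<notin> C" "y \<in> topspace X"
    using separating_clopensD[OF assms] by metis
  then show "\<exists>U V. openin X U \<and> openin X V \<and> x \<in> U \<and> y \<in> V \<and> disjnt U V"
    by (intro exI[of _ C] exI[of _ "topspace X - C"]) (auto simp: disjnt_def)
qed

lemma dim_le_0_if_separating_clopens:
  assumes "compact_space X" and "separating_clopens X \<C>"
  shows "X dim_le 0"
  unfolding dimension_le_0_neighbourhood_base_of_clopen neighbourhood_base_of
proof (intro allI impI)
  fix W x assume W: "openin X W \<and> x \<in> W"
  define K where "K = topspace X - W"
  have "compactin X K"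
    unfolding K_def using W assms(1) by (simp add: closedin_compact_space closedin_diff)
  have x: "x \<in> topspace X" using W openin_subset by blast
  have "\<exists>C. openin X C \<and> closedin X C \<and> x \<in> C \<and> y \<notin> C" if "y \<in> K" for y
    using separating_clopensD[OF assms(2) x, of y] that W unfolding K_def by blast
  then obtain N where N: "\<And>y. y \<in> K \<Longrightarrow> openin X (N y) \<and> closedin X (N y) \<and> x \<in> N y \<and> y \<notin> N y"
    by metis
  have "K \<subseteq> \<Union>((\<lambda>y. topspace X - N y) ` K)" using N unfolding K_def by auto
  moreover have "\<forall>U \<in> (\<lambda>y. topspace X - N y) ` K. openin X U" using N by auto
  ultimately obtain \<F> where "finite \<F>" "\<F> \<subseteq> (\<lambda>y. topspace X - N y) ` K" "K \<subseteq> \<Union>\<F>"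
    using \<open>compactin X K\<close> unfolding compactin_def by meson
  then obtain F where F: "finite F" "F \<subseteq> K" "K \<subseteq> (\<Union>y\<in>F. topspace X - N y)"
    by (metis finite_subset_image)
  define V where "V = topspace X \<inter> \<Inter>(N ` F)"
  have "openin X V"
    unfolding V_def using F N by (intro openin_Int_Inter) auto
  moreover have "closedin X V"
    unfolding V_def using F N by (cases "F = {}") (auto intro!: closedin_Int closedin_Inter)
  moreover have "x \<in> V" "V \<subseteq> W"
    unfolding V_def using F N x unfolding K_def by auto
  ultimately show "\<exists>U V. openin X U \<and> (closedin X V \<and> openin X V) \<and> x \<in> U \<and> U \<subseteq> V \<and> V \<subseteq> W"
    by blast
qed

lemma gdelta_in_injectivity_points:
  assumes "compact_space P" and "Hausdorff_space X" and "continuous_map P X \<pi>"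
    and "countable \<C>" and "separating_clopens P \<C>"
  shows "gdelta_in P {p \<in> topspace P. {q \<in> topspace P. \<pi> q = \<pi> p} = {p}}"
proof -
  \<comment> \<open>the points whose fibre does not cross the boundary of \<open>C\<close>; open because \<open>\<pi>\<close> is closed\<close>
  define W where "W C = {p \<in> topspace P. \<forall>q \<in> topspace P. \<pi> q = \<pi> p \<longrightarrow> (q \<in> C \<longleftrightarrow> p \<in> C)}"
    for C
  have closed_preimage_image: "closedin P {p \<in> topspace P. \<pi> p \<in> \<pi> ` A}" if "closedin P A" for A
  proof -
    have "closedin X (\<pi> ` A)"
      using continuous_imp_closed_map[OF assms(3,1,2)] that unfolding closed_map_def by blast
    then show ?thesis by (rule closedin_continuous_map_preimage[OF assms(3)])
  qed
  have "openin P (W C)" if "C \<in> \<C>" for C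
  proof -
    have C: "closedin P C" "closedin P (topspace P - C)"
      using separating_clopens_clopen[OF assms(5) that] by auto
    have "W C = topspace P - ((C \<inter> {p \<in> topspace P. \<pi> p \<in> \<pi> ` (topspace P - C)})
        \<union> ((topspace P - C) \<inter> {p \<in> topspace P. \<pi> p \<in> \<pi> ` C}))"
      unfolding W_def using closedin_subset[OF C(1)] by (auto intro: rev_image_eqI)
    then show ?thesis
      using C closed_preimage_image by (simp add: closedin_Int closedin_Un openin_diff)
  qed
  then have "gdelta_in P (\<Inter>(insert (topspace P) (W ` \<C>)))"
    using assms(4) by (intro gdelta_in_Inter) (auto intro: open_imp_gdelta_in)
  moreover have "\<Inter>(insert (topspace P) (W ` \<C>)) = {p \<in> topspace P. {q \<in> topspace P. \<pi> q = \<pi> p} = {p}}"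
  proof (intro equalityI subsetI)
    fix p assume p: "p \<in> \<Inter>(insert (topspace P) (W ` \<C>))"
    have pP: "p \<in> topspace P" using p by blast
    have "q = p" if q: "q \<in> topspace P" "\<pi> q = \<pi> p" for q
    proof (rule ccontr)
      assume "q \<noteq> p"
      then obtain C where "C \<in> \<C>" "(q \<in> C) \<noteq> (p \<in> C)"
        using separating_clopens_separates[OF assms(5) q(1) pP] by blast
      then show False using p q unfolding W_def by blast
    qed
    then show "p \<in> {p \<in> topspace P. {q \<in> topspace P. \<pi> q = \<pi> p} = {p}}"
      using p by auto
  next
    fix p assume "p \<in> {p \<in> topspace P. {q \<in> topspace P. \<pi> q = \<pi> p} = {p}}"
    then have "p \<in> topspace P" "\<And>q. q \<in> topspace P \<Longrightarrow> \<pi> q = \<pi> p \<Longrightarrow> q = p"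
      by auto
    then show "p \<in> \<Inter>(insert (topspace P) (W ` \<C>))"
      unfolding W_def by auto
  qed
  ultimately show ?thesis by simp
qed

section \<open>Brouwer's characterisation of the Cantor space\<close>

locale clopen_tree =
  fixes X :: "'a topology" and B :: "nat \<Rightarrow> 'a set"
  assumes compact: "compact_space X"
    and clopen: "\<And>n. openin X (B n) \<and> closedin X (B n)"
    and separating: "\<And>x y. \<lbrakk>x \<in> topspace X; y \<in> topspace X; x \<noteq> y\<rbrakk> \<Longrightarrow> \<exists>n. (x \<in> B n) \<noteq> (y \<in> B n)"
    and no_isolated: "\<And>x. x \<in> topspace X \<Longrightarrow> \<not> openin X {x}"
    and nonempty: "topspace X \<noteq> {}"
begin

definition splits :: "'a set \<Rightarrow> nat \<Rightarrow> bool" where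
  "splits C m \<longleftrightarrow> C \<inter> B m \<noteq> {} \<and> C - B m \<noteq> {}"

text \<open>
  A cell of depth \<open>n + 1\<close> arises from one of depth \<open>n\<close> by splitting along \<open>B n\<close> if that set
  splits it, so that cells of depth \<open>> n\<close> decide membership in \<open>B n\<close>; otherwise along some
  \<open>B m\<close> that does split it, so that no cell is empty. Such an \<open>m\<close> exists because cells are open
  and \<open>X\<close> has no isolated points.
\<close>

definition split_index :: "nat \<Rightarrow> 'a set \<Rightarrow> nat" where
  "split_index n C = (if splits C n then n else SOME m. splits C m)"

lemma splits_split_index:
  assumes "openin X C" "C \<noteq> {}"
  shows "splits C (split_index n C)"
proof -
  obtain x where x: "x \<in> C" using assms(2) by blast
  have xX: "x \<in> topspace X" using x assms(1) openin_subset by blast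
  have "C \<noteq> {x}" using no_isolated[OF xX] assms(1) by auto
  then obtain y where y: "y \<in> C" "y \<noteq> x" using x by blast
  have "y \<in> topspace X" using y assms(1) openin_subset by blast
  then obtain m where "(x \<in> B m) \<noteq> (y \<in> B m)" using separating xX y(2) by metis
  then have "splits C m" unfolding splits_def using x y by blast
  then show ?thesis unfolding split_index_def by (auto intro: someI)
qed

fun cell :: "bool list \<Rightarrow> 'a set" where
  "cell [] = topspace X"
| "cell (b # w) = (if b then cell w \<inter> B (split_index (length w) (cell w))
                   else cell w - B (split_index (length w) (cell w)))"

declare cell.simps(2) [simp del]

lemma cell_clopen_nonempty: "openin X (cell w) \<and> closedin X (cell w) \<and> cell w \<noteq> {}"
proof (induction w)
  case Nil
  then show ?case using nonempty by simp
next
  case (Cons b w)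
  then have "splits (cell w) (split_index (length w) (cell w))" by (blast intro: splits_split_index)
  then show ?case using Cons clopen[of "split_index (length w) (cell w)"]
    by (auto simp: cell.simps splits_def openin_Int closedin_Int openin_diff closedin_diff)
qed

lemma cell_Cons_subset: "cell (b # w) \<subseteq> cell w"
  by (auto simp: cell.simps)

lemma cell_subset_topspace: "cell w \<subseteq> topspace X"
  using cell_clopen_nonempty openin_subset by blast

lemma cell_True_Un_False: "cell (True # w) \<union> cell (False # w) = cell w"
  by (auto simp: cell.simps)

lemma cell_True_Int_False: "cell (True # w) \<inter> cell (False # w) = {}"
  by (auto simp: cell.simps)

lemma cell_decides:
  assumes "n < length w"
  shows "cell w \<subseteq> B n \<or> cell w \<inter> B n = {}"
  using assms
proof (induction w)
  case Nil
  then show ?case by simp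
next
  case (Cons b w)
  show ?case
  proof (cases "n = length w")
    case True
    then have "split_index n (cell w) = n \<or> \<not> splits (cell w) n"
      unfolding split_index_def by auto
    then show ?thesis using True unfolding splits_def by (cases b) (auto simp: cell.simps)
  next
    case False
    then show ?thesis using Cons cell_Cons_subset[of b w] by auto
  qed
qed

lemma cells_disjoint: "length v = length w \<Longrightarrow> v \<noteq> w \<Longrightarrow> cell v \<inter> cell w = {}"
proof (induction v w rule: list_induct2)
  case Nil
  then show ?case by simp
next
  case (Cons a v b w)
  show ?case
  proof (cases "v = w")
    case True
    then show ?thesis using Cons.prems cell_True_Int_False[of w] by (cases a; cases b) auto
  next
    case False
    then show ?thesis using Cons.IH Cons.hyps cell_Cons_subset[of a v] cell_Cons_subset[of b w] by blast
  qed
qed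

fun prefix_word :: "(nat \<Rightarrow> bool) \<Rightarrow> nat \<Rightarrow> bool list" where
  "prefix_word \<alpha> 0 = []"
| "prefix_word \<alpha> (Suc n) = \<alpha> n # prefix_word \<alpha> n"

lemma length_prefix_word [simp]: "length (prefix_word \<alpha> n) = n"
  by (induction n) auto

definition address :: "'a \<Rightarrow> nat \<Rightarrow> bool" where
  "address x n \<longleftrightarrow> (\<exists>w. length w = n \<and> x \<in> cell (True # w))"

lemma not_address_if_False_cell:
  assumes "x \<in> cell (False # w)"
  shows "\<not> address x (length w)"
proof
  assume "address x (length w)"
  then obtain v where v: "length v = length w" "x \<in> cell (True # v)"
    unfolding address_def by auto
  have "x \<in> cell v" "x \<in> cell w"
    using v(2) assms cell_Cons_subset by blast+
  then have "v = w"
    using cells_disjoint[OF v(1)] by blast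
  then show False using v assms cell_True_Int_False by blast
qed

lemma in_cell_address: "x \<in> topspace X \<Longrightarrow> x \<in> cell (prefix_word (address x) n)"
proof (induction n)
  case 0
  then show ?case by simp
next
  case (Suc n)
  let ?w = "prefix_word (address x) n"
  have "x \<in> cell (True # ?w) \<or> x \<in> cell (False # ?w)"
    using Suc cell_True_Un_False by blast
  then show ?case
  proof
    assume "x \<in> cell (True # ?w)"
    then have "\<exists>w. length w = n \<and> x \<in> cell (True # w)" by (intro exI[of _ ?w]) simp
    then have "address x n" unfolding address_def .
    then show ?thesis using \<open>x \<in> cell (True # ?w)\<close> by simp
  next
    assume "x \<in> cell (False # ?w)"
    then have "\<not> address x n" using not_address_if_False_cell[of x ?w] by simp
    then show ?thesis using \<open>x \<in> cell (False # ?w)\<close> by simp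
  qed
qed

lemma address_eqI:
  assumes "x \<in> topspace X" "\<And>n. x \<in> cell (prefix_word \<alpha> n)"
  shows "address x = \<alpha>"
proof
  fix n
  have "x \<in> cell (prefix_word \<alpha> (Suc n)) \<inter> cell (prefix_word (address x) (Suc n))"
    using assms in_cell_address by blast
  then have "prefix_word \<alpha> (Suc n) = prefix_word (address x) (Suc n)"
    using cells_disjoint[of "prefix_word \<alpha> (Suc n)" "prefix_word (address x) (Suc n)"] by auto
  then show "address x n = \<alpha> n" by simp
qed

lemma inj_on_address: "inj_on address (topspace X)"
proof
  fix x y assume xy: "x \<in> topspace X" "y \<in> topspace X" "address x = address y"
  show "x = y"
  proof (rule ccontr)
    assume "x \<noteq> y"
    then obtain m where m: "(x \<in> B m) \<noteq> (y \<in> B m)" using separating xy by blast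
    have "x \<in> cell (prefix_word (address x) (Suc m))"
      by (rule in_cell_address[OF xy(1)])
    moreover have "y \<in> cell (prefix_word (address x) (Suc m))"
      unfolding xy(3) by (rule in_cell_address[OF xy(2)])
    moreover have "cell (prefix_word (address x) (Suc m)) \<subseteq> B m \<or>
        cell (prefix_word (address x) (Suc m)) \<inter> B m = {}"
      by (rule cell_decides) simp
    ultimately show False using m by blast
  qed
qed

lemma address_surj: "address ` topspace X = UNIV"
proof -
  have "\<alpha> \<in> address ` topspace X" for \<alpha>
  proof -
    have "(\<Inter>n. cell (prefix_word \<alpha> n)) \<noteq> {}"
    proof (rule compact_space_imp_nest[OF compact])
      show "closedin X (cell (prefix_word \<alpha> n))" "cell (prefix_word \<alpha> n) \<noteq> {}" for n
        using cell_clopen_nonempty by auto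
      show "decseq (\<lambda>n. cell (prefix_word \<alpha> n))"
        by (intro decseq_SucI) (simp only: prefix_word.simps cell_Cons_subset)
    qed
    then obtain x where x: "\<And>n. x \<in> cell (prefix_word \<alpha> n)" by blast
    then have "x \<in> topspace X" using cell_subset_topspace by blast
    then show ?thesis using address_eqI x by blast
  qed
  then show ?thesis by auto
qed

lemma continuous_map_address: "continuous_map X cantor_space address"
  unfolding cantor_space_def continuous_map_componentwise_UNIV
proof
  fix n
  have "{x \<in> topspace X. address x n} = (\<Union>w\<in>{w. length w = n}. cell (True # w))"
    using cell_subset_topspace unfolding address_def by blast
  moreover have "{x \<in> topspace X. \<not> address x n} = (\<Union>w\<in>{w. length w = n}. cell (False # w))"
  proof (intro equalityI subsetI)
    fix x assume "x \<in> {x \<in> topspace X. \<not> address x n}"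
    then have "x \<in> cell (False # prefix_word (address x) n)"
      using in_cell_address[of x "Suc n"] by simp
    then show "x \<in> (\<Union>w\<in>{w. length w = n}. cell (False # w))" by force
  next
    fix x assume "x \<in> (\<Union>w\<in>{w. length w = n}. cell (False # w))"
    then show "x \<in> {x \<in> topspace X. \<not> address x n}"
      using cell_subset_topspace not_address_if_False_cell by blast
  qed
  moreover have "openin X (\<Union>w\<in>{w. length w = n}. cell (b # w))" for b
    using cell_clopen_nonempty by (intro openin_Union) auto
  ultimately show "continuous_map X (discrete_topology UNIV) (\<lambda>x. address x n)"
    by (intro continuous_map_to_discrete_bool) simp_all
qed

lemma homeomorphic_map_address: "homeomorphic_map X cantor_space address"
proof (rule continuous_imp_homeomorphic_map[OF continuous_map_address compact])
  show "Hausdorff_space cantor_space"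
    unfolding cantor_space_def by (simp add: Hausdorff_space_product_topology)
  show "address ` topspace X = topspace cantor_space"
    unfolding cantor_space_def using address_surj by simp
qed (rule inj_on_address)

end

theorem homeomorphic_cantor_space_if_perfect:
  assumes "compact_space X" and "countable \<C>" and "separating_clopens X \<C>"
    and "topspace X \<noteq> {}" and "\<And>x. x \<in> topspace X \<Longrightarrow> \<not> openin X {x}"
  shows "X homeomorphic_space cantor_space"
proof -
  obtain x where x: "x \<in> topspace X" using assms(4) by blast
  have "topspace X \<noteq> {x}"
  proof
    assume "topspace X = {x}"
    then show False using assms(5)[OF x] openin_topspace[of X] by simp
  qed
  then obtain y where "y \<in> topspace X" "y \<noteq> x" using x by blast
  then have "\<C> \<noteq> {}" using separating_clopens_separates[OF assms(3) x] by blast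
  have "clopen_tree X (from_nat_into \<C>)"
  proof
    show "openin X (from_nat_into \<C> n) \<and> closedin X (from_nat_into \<C> n)" for n
      using separating_clopens_clopen[OF assms(3) from_nat_into[OF \<open>\<C> \<noteq> {}\<close>]] .
    show "\<exists>n. (u \<in> from_nat_into \<C> n) \<noteq> (v \<in> from_nat_into \<C> n)"
      if uv: "u \<in> topspace X" "v \<in> topspace X" "u \<noteq> v" for u v
    proof -
      obtain C where "C \<in> \<C>" "(u \<in> C) \<noteq> (v \<in> C)"
        using separating_clopens_separates[OF assms(3) uv] by blast
      moreover obtain n where "from_nat_into \<C> n = C"
        using from_nat_into_surj[OF assms(2) \<open>C \<in> \<C>\<close>] by blast
      ultimately show ?thesis by blast
    qed
  qed (fact assms(1), fact assms(5), fact assms(4))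
  then show ?thesis
    by (rule homeomorphic_map_imp_homeomorphic_space[OF clopen_tree.homeomorphic_map_address])
qed

section \<open>Sets of indices as points of a Cantor cube\<close>

definition membership_topology :: "'i set topology" where
  "membership_topology =
     pullback_topology UNIV (\<lambda>p i. i \<in> p) (product_topology (\<lambda>_. discrete_topology (UNIV::bool set)) UNIV)"

lemma topspace_membership_topology [simp]: "topspace membership_topology = UNIV"
  unfolding membership_topology_def by (simp add: topspace_pullback_topology)

lemma continuous_map_into_membership_topology:
  assumes "\<And>i. openin X {x \<in> topspace X. i \<in> f x}" and "\<And>i. openin X {x \<in> topspace X. i \<notin> f x}"
  shows "continuous_map X membership_topology f"
  unfolding membership_topology_def
proof (rule continuous_map_pullback')
  show "continuous_map X (product_topology (\<lambda>_. discrete_topology UNIV) UNIV) ((\<lambda>p i. i \<in> p) \<circ> f)"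
    unfolding continuous_map_componentwise_UNIV using assms
    by (auto intro!: continuous_map_to_discrete_bool)
qed auto

lemma openin_product_discrete_bool_coordinate:
  "openin (product_topology (\<lambda>_. discrete_topology (UNIV::bool set)) UNIV) {x. x i \<in> B}"
proof -
  have "continuous_map (product_topology (\<lambda>_. discrete_topology (UNIV::bool set)) UNIV)
      (discrete_topology UNIV) (\<lambda>x. x i)"
    by (rule continuous_map_product_projection) simp
  from openin_continuous_map_preimage[OF this, of B] show ?thesis by simp
qed

lemma openin_membership_topology_cylinder:
  "openin membership_topology {p. i \<in> p}" "openin membership_topology {p. i \<notin> p}"
  unfolding membership_topology_def openin_pullback_topology
  using openin_product_discrete_bool_coordinate[of i "{True}"]
    openin_product_discrete_bool_coordinate[of i "{False}"]
  by (auto intro: exI[of _ "{x. x i}"] exI[of _ "{x. \<not> x i}"])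

lemma closedin_membership_topology_cylinder:
  "closedin membership_topology {p. i \<in> p}" "closedin membership_topology {p. i \<notin> p}"
  using openin_membership_topology_cylinder[of i]
  by (simp_all add: closedin_def Compl_eq_Diff_UNIV[symmetric] Collect_neg_eq[symmetric])

lemma compact_space_membership_topology: "compact_space membership_topology"
proof -
  let ?C = "product_topology (\<lambda>_. discrete_topology (UNIV::bool set)) (UNIV::'i set)"
  have "continuous_map ?C membership_topology Collect"
    using openin_product_discrete_bool_coordinate[of _ "{True}"]
      openin_product_discrete_bool_coordinate[of _ "{False}"]
    by (intro continuous_map_into_membership_topology) auto
  moreover have "compact_space ?C"
    by (simp add: compact_space_product_topology compact_space_discrete_topology)
  ultimately have "compactin membership_topology (Collect ` topspace ?C)"
    by (metis compact_space_def image_compactin)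
  moreover have "Collect ` topspace ?C = topspace membership_topology"
    by (auto intro: image_eqI[of _ _ "\<lambda>i. i \<in> _"])
  ultimately show ?thesis unfolding compact_space_def by metis
qed

section \<open>Invariant separating families of open sets\<close>

lemma homeomorphic_maps_mem_image_iff:
  assumes "homeomorphic_maps X Y f g" and "x \<in> topspace X" and "U \<subseteq> topspace Y"
  shows "f x \<in> U \<longleftrightarrow> x \<in> g ` U"
  using assms unfolding homeomorphic_maps_def continuous_map_def by (auto intro: rev_image_eqI)

lemma homeomorphic_maps_mem_closure_of_iff:
  assumes "homeomorphic_maps X Y f g" and "x \<in> topspace X" and "U \<subseteq> topspace Y"
  shows "f x \<in> Y closure_of U \<longleftrightarrow> x \<in> X closure_of (g ` U)"
proof -
  have "homeomorphic_map Y X g"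
    using assms(1) homeomorphic_maps_map by blast
  then have "X closure_of (g ` U) = g ` (Y closure_of U)"
    by (rule homeomorphic_map_closure_of[OF _ assms(3)])
  then show ?thesis
    using homeomorphic_maps_mem_image_iff[OF assms(1,2) closure_of_subset_topspace] by simp
qed

lemma homeomorphic_maps_openin_funpow_image:
  assumes "homeomorphic_maps X X f g" and "openin X V"
  shows "openin X ((f ^^ n) ` V)"
proof (induction n)
  case 0
  then show ?case using assms(2) by simp
next
  case (Suc n)
  have "homeomorphic_map X X f"
    using assms(1) homeomorphic_maps_map by blast
  then have "openin X (f ` (f ^^ n) ` V)"
    using Suc homeomorphic_map_openness openin_subset by blast
  then show ?case by (simp add: image_comp)
qed

lemma homeomorphic_maps_image_funpow_Suc:
  assumes "homeomorphic_maps X X f g" and "openin X V"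
  shows "f ` (g ^^ Suc n) ` V = (g ^^ n) ` V"
proof -
  have "(g ^^ n) ` V \<subseteq> topspace X"
    using homeomorphic_maps_openin_funpow_image[OF homeomorphic_maps_sym[THEN iffD1, OF assms(1)] assms(2)]
    by (rule openin_subset)
  then show ?thesis
    using assms(1) unfolding homeomorphic_maps_def by (force simp: image_comp)
qed

lemma homeomorphic_maps_image_orbit:
  assumes hom: "homeomorphic_maps X X f g" and "openin X V"
    and "U \<in> range (\<lambda>n. (f ^^ n) ` V) \<union> range (\<lambda>n. (g ^^ n) ` V)"
  shows "f ` U \<in> range (\<lambda>n. (f ^^ n) ` V) \<union> range (\<lambda>n. (g ^^ n) ` V)"
proof -
  obtain n where "U = (f ^^ n) ` V \<or> U = (g ^^ n) ` V"
    using assms(3) by blast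
  then consider "U = (f ^^ n) ` V" | "U = (g ^^ 0) ` V" | m where "U = (g ^^ Suc m) ` V"
    by (cases n) auto
  then show ?thesis
  proof cases
    case 1
    then have "f ` U = (f ^^ Suc n) ` V" by (simp add: image_comp)
    then show ?thesis by blast
  next
    case 2
    then have "f ` U = (f ^^ 1) ` V" by simp
    then show ?thesis by blast
  next
    case 3
    then have "f ` U = (g ^^ m) ` V"
      using homeomorphic_maps_image_funpow_Suc[OF hom assms(2)] by simp
    then show ?thesis by blast
  qed
qed

lemma homeomorphic_maps_invariant_family:
  assumes hom: "homeomorphic_maps X X f g" and "countable \<V>" and "\<And>V. V \<in> \<V> \<Longrightarrow> openin X V"
  obtains \<U> where "countable \<U>" "\<V> \<subseteq> \<U>" "\<And>U. U \<in> \<U> \<Longrightarrow> openin X U"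
    "\<And>U. U \<in> \<U> \<Longrightarrow> f ` U \<in> \<U>" "\<And>U. U \<in> \<U> \<Longrightarrow> g ` U \<in> \<U>"
proof -
  have hom': "homeomorphic_maps X X g f"
    using hom homeomorphic_maps_sym by blast
  define orbit where "orbit V = range (\<lambda>n. (f ^^ n) ` V) \<union> range (\<lambda>n. (g ^^ n) ` V)" for V
  have countable: "countable (\<Union>(orbit ` \<V>))"
    unfolding orbit_def using assms(2) by (intro countable_UN countable_Un) auto
  have "V \<in> orbit V" for V
    unfolding orbit_def by (rule UnI1, rule range_eqI[of _ _ 0]) simp
  then have subset: "\<V> \<subseteq> \<Union>(orbit ` \<V>)"
    by blast
  have opens: "openin X U" if U: "U \<in> \<Union>(orbit ` \<V>)" for U
  proof -
    obtain V n where "V \<in> \<V>" "U = (f ^^ n) ` V \<or> U = (g ^^ n) ` V"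
      using U unfolding orbit_def by blast
    then show ?thesis
      using homeomorphic_maps_openin_funpow_image[OF hom assms(3)]
        homeomorphic_maps_openin_funpow_image[OF hom' assms(3)] by auto
  qed
  have invariant: "f ` U \<in> \<Union>(orbit ` \<V>)" "g ` U \<in> \<Union>(orbit ` \<V>)"
    if U: "U \<in> \<Union>(orbit ` \<V>)" for U
  proof -
    obtain V where V: "V \<in> \<V>" "U \<in> orbit V" using U by blast
    have "f ` U \<in> orbit V"
      using homeomorphic_maps_image_orbit[OF hom assms(3)[OF V(1)]] V(2) unfolding orbit_def .
    moreover have "g ` U \<in> orbit V"
      using homeomorphic_maps_image_orbit[OF hom' assms(3)[OF V(1)]] V(2) unfolding orbit_def
      by (simp add: Un_commute)
    ultimately show "f ` U \<in> \<Union>(orbit ` \<V>)" "g ` U \<in> \<Union>(orbit ` \<V>)"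
      using V(1) by blast+
  qed
  show thesis
    by (rule that[OF countable subset opens invariant])
qed

lemma compact_separating_open_family:
  fixes Z :: "'a::metric_space set"
  assumes "compact Z"
  obtains \<V> where "countable \<V>" "\<And>V. V \<in> \<V> \<Longrightarrow> openin (top_of_set Z) V"
    "\<And>z w. \<lbrakk>z \<in> Z; w \<in> Z; z \<noteq> w\<rbrakk> \<Longrightarrow> \<exists>V\<in>\<V>. z \<in> V \<and> w \<notin> top_of_set Z closure_of V"
proof -
  have "\<forall>n. \<exists>k. finite k \<and> Z \<subseteq> (\<Union>x\<in>k. ball x (inverse (real (Suc n))))"
    using assms unfolding compact_eq_totally_bounded by auto
  then obtain K where K: "\<And>n. finite (K n)" "\<And>n. Z \<subseteq> (\<Union>x\<in>K n. ball x (inverse (real (Suc n))))"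
    by metis
  define \<V> where "\<V> = (\<Union>n. (\<lambda>x. Z \<inter> ball x (inverse (real (Suc n)))) ` K n)"
  have countable: "countable \<V>"
    unfolding \<V>_def using K(1) by (intro countable_UN) (auto intro: countable_finite)
  have opens: "openin (top_of_set Z) V" if V: "V \<in> \<V>" for V
    using V unfolding \<V>_def by (auto intro: openin_open_Int)
  have separating: "\<exists>V\<in>\<V>. z \<in> V \<and> w \<notin> top_of_set Z closure_of V"
    if zw: "z \<in> Z" "w \<in> Z" "z \<noteq> w" for z w
  proof -
    obtain n where n: "inverse (real (Suc n)) < dist z w / 2"
      using reals_Archimedean[of "dist z w / 2"] zw(3) by auto
    let ?r = "inverse (real (Suc n))"
    obtain x where x: "x \<in> K n" "z \<in> ball x ?r" using K(2) zw(1) by blast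
    have "top_of_set Z closure_of (Z \<inter> ball x ?r) \<subseteq> closure (ball x ?r)"
      by (auto simp: closure_of_subtopology intro: closure_mono[THEN subsetD, of "Z \<inter> ball x ?r"])
    also have "\<dots> \<subseteq> cball x ?r"
      by (rule closure_minimal[OF ball_subset_cball closed_cball])
    finally have "top_of_set Z closure_of (Z \<inter> ball x ?r) \<subseteq> cball x ?r" .
    moreover have "w \<notin> cball x ?r"
      using x(2) n dist_triangle[of z w x] by (auto simp: dist_commute)
    ultimately show ?thesis using x zw unfolding \<V>_def by blast
  qed
  show thesis
    by (rule that[OF countable opens separating])
qed

section \<open>Coding points by a separating family\<close>

locale separating_coding =
  fixes X :: "'a topology" and \<U> :: "'a set set"
  assumes compact: "compact_space X"
    and countable_family: "countable \<U>"
    and openin_family: "\<And>U. U \<in> \<U> \<Longrightarrow> openin X U"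
    and separating_family:
      "\<And>x y. \<lbrakk>x \<in> topspace X; y \<in> topspace X; x \<noteq> y\<rbrakk> \<Longrightarrow> \<exists>U\<in>\<U>. x \<in> U \<and> y \<notin> X closure_of U"
begin

lemma family_subset_topspace: "U \<in> \<U> \<Longrightarrow> U \<subseteq> topspace X"
  using openin_family openin_subset by blast

lemma Hausdorff: "Hausdorff_space X"
  unfolding Hausdorff_space_def
proof (intro allI impI)
  fix x y assume xy: "x \<in> topspace X \<and> y \<in> topspace X \<and> x \<noteq> y"
  then obtain U where U: "U \<in> \<U>" "x \<in> U" "y \<notin> X closure_of U"
    using separating_family by blast
  have "disjnt U (topspace X - X closure_of U)"
    using closure_of_subset[OF family_subset_topspace[OF U(1)]] by (auto simp: disjnt_def)
  then show "\<exists>U V. openin X U \<and> openin X V \<and> x \<in> U \<and> y \<in> V \<and> disjnt U V"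
    using U xy openin_family[OF U(1)] by (intro exI[of _ U] exI[of _ "topspace X - X closure_of U"]) auto
qed

definition code :: "'a \<Rightarrow> 'a set set" where
  "code x = {U \<in> \<U>. x \<in> U}"

definition boundary_free_points :: "'a set" where
  "boundary_free_points = {x \<in> topspace X. \<forall>U\<in>\<U>. x \<in> U \<or> x \<notin> X closure_of U}"

lemma boundary_free_points_subset: "boundary_free_points \<subseteq> topspace X"
  unfolding boundary_free_points_def by blast

lemma closure_of_boundary_free_points: "X closure_of boundary_free_points = topspace X"
proof -
  define G where "G U = U \<union> (topspace X - X closure_of U)" for U
  have "X closure_of \<Inter>(G ` \<U>) = topspace X"
  proof (rule Baire_category)
    show "completely_metrizable_space X \<or> locally_compact_space X \<and> regular_space X"
      using compact Hausdorff
      by (simp add: compact_imp_locally_compact_space compact_Hausdorff_imp_regular_space)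
    show "countable (G ` \<U>)"
      using countable_family by blast
  next
    fix T assume "T \<in> G ` \<U>"
    then obtain U where U: "U \<in> \<U>" "T = G U" by blast
    have "openin X T"
      unfolding U G_def using openin_family[OF U(1)] by (intro openin_Un openin_diff) auto
    moreover have "X closure_of U \<subseteq> X closure_of T"
      unfolding U G_def by (rule closure_of_mono) blast
    moreover have "topspace X - X closure_of U \<subseteq> X closure_of T"
    proof -
      have "T \<subseteq> topspace X"
        unfolding U G_def using family_subset_topspace[OF U(1)] by blast
      then have "T \<subseteq> X closure_of T" by (rule closure_of_subset)
      then show ?thesis unfolding U G_def by blast
    qed
    moreover have "X closure_of T \<subseteq> topspace X"
      by (rule closure_of_subset_topspace)
    ultimately show "openin X T \<and> X closure_of T = topspace X"
      by blast
  qed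
  moreover have "topspace X \<inter> \<Inter>(G ` \<U>) = boundary_free_points"
    unfolding boundary_free_points_def G_def by auto
  ultimately show ?thesis
    by (metis closure_of_restrict)
qed

lemma inj_on_code: "inj_on code (topspace X)"
proof
  fix x y assume xy: "x \<in> topspace X" "y \<in> topspace X" "code x = code y"
  show "x = y"
  proof (rule ccontr)
    assume "x \<noteq> y"
    then obtain U where U: "U \<in> \<U>" "x \<in> U" "y \<notin> X closure_of U"
      using separating_family xy by blast
    then have "y \<in> U" using xy(3) unfolding code_def by blast
    then show False
      using U closure_of_subset[OF family_subset_topspace[OF U(1)]] by blast
  qed
qed

lemma continuous_map_code_boundary_free_points:
  "continuous_map (subtopology X boundary_free_points) membership_topology code"
proof (rule continuous_map_into_membership_topology)
  fix U
  let ?Y = "subtopology X boundary_free_points"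
  have "{x \<in> topspace ?Y. U \<in> code x} = boundary_free_points \<inter> (if U \<in> \<U> then U else {})"
    using boundary_free_points_subset unfolding code_def by auto
  then show "openin ?Y {x \<in> topspace ?Y. U \<in> code x}"
    using openin_family by (simp add: openin_subtopology_Int2)
  have "{x \<in> topspace ?Y. U \<notin> code x} =
      boundary_free_points \<inter> (if U \<in> \<U> then topspace X - X closure_of U else topspace X)"
    using boundary_free_points_subset closure_of_subset[OF family_subset_topspace]
    unfolding code_def boundary_free_points_def by auto
  then show "openin ?Y {x \<in> topspace ?Y. U \<notin> code x}"
    by (simp add: openin_subtopology_Int2 openin_diff)
qed

definition code_space :: "'a set set set" where
  "code_space = membership_topology closure_of (code ` boundary_free_points)"

definition code_topology :: "'a set set topology" where
  "code_topology = subtopology membership_topology code_space"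

lemma topspace_code_topology [simp]: "topspace code_topology = code_space"
  by (simp add: code_topology_def)

lemma compact_space_code_topology: "compact_space code_topology"
  unfolding code_topology_def code_space_def
  by (simp add: closedin_compact_space compact_space_membership_topology compact_space_subtopology)

lemma code_boundary_free_in_code_space: "x \<in> boundary_free_points \<Longrightarrow> code x \<in> code_space"
  unfolding code_space_def by (rule closure_of_subset[THEN subsetD]) auto

lemma closure_of_code_boundary_free_points:
  "code_topology closure_of (code ` boundary_free_points) = code_space"
  using code_boundary_free_in_code_space unfolding code_topology_def closure_of_subtopology
  by (simp add: Int_absorb1 image_subset_iff code_space_def[symmetric])

lemma code_space_subset_family:
  assumes "p \<in> code_space" shows "p \<subseteq> \<U>"
proof -
  have "closedin membership_topology (\<Inter>(insert UNIV ((\<lambda>U. {p. U \<notin> p}) ` (- \<U>))))"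
    using closedin_topspace[of membership_topology]
    by (intro closedin_Inter) (auto simp: closedin_membership_topology_cylinder)
  moreover have "code ` boundary_free_points \<subseteq> \<Inter>(insert UNIV ((\<lambda>U. {p. U \<notin> p}) ` (- \<U>)))"
    unfolding code_def by auto
  ultimately have "code_space \<subseteq> \<Inter>(insert UNIV ((\<lambda>U. {p. U \<notin> p}) ` (- \<U>)))"
    unfolding code_space_def by (rule closure_of_minimal[rotated])
  then show ?thesis using assms by blast
qed

definition cylinders :: "'a set set set set" where
  "cylinders = (\<lambda>U. code_space \<inter> {p. U \<in> p}) ` \<U>"

lemma countable_cylinders: "countable cylinders"
  unfolding cylinders_def using countable_family by blast

lemma separating_clopens_cylinders: "separating_clopens code_topology cylinders"
  unfolding separating_clopens_def
proof (rule conjI; intro ballI impI)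
  fix C assume "C \<in> cylinders"
  then obtain U where "C = code_space \<inter> {p. U \<in> p}" unfolding cylinders_def by blast
  then show "openin code_topology C \<and> closedin code_topology C"
    unfolding code_topology_def
    by (simp add: openin_subtopology_Int2 closedin_subtopology_Int_closed
        openin_membership_topology_cylinder closedin_membership_topology_cylinder)
next
  fix p q assume "p \<in> topspace code_topology" "q \<in> topspace code_topology" "p \<noteq> q"
  then have "p \<subseteq> \<U>" "q \<subseteq> \<U>" "p \<noteq> q"
    using code_space_subset_family by auto
  then obtain U where "U \<in> \<U>" "(U \<in> p) \<noteq> (U \<in> q)" by blast
  then show "\<exists>C\<in>cylinders. (p \<in> C) \<noteq> (q \<in> C)"
    using \<open>p \<in> topspace code_topology\<close> \<open>q \<in> topspace code_topology\<close>
    unfolding cylinders_def by auto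
qed

definition coded_points :: "'a set set \<Rightarrow> 'a set" where
  "coded_points p = {x \<in> topspace X. \<forall>U\<in>\<U>. (U \<in> p \<longrightarrow> x \<in> X closure_of U) \<and> (U \<notin> p \<longrightarrow> x \<notin> U)}"

lemma coded_points_subsingleton:
  assumes "x \<in> coded_points p" and "y \<in> coded_points p"
  shows "x = y"
proof (rule ccontr)
  assume "x \<noteq> y"
  moreover have "x \<in> topspace X" "y \<in> topspace X"
    using assms unfolding coded_points_def by auto
  ultimately obtain U where U: "U \<in> \<U>" "x \<in> U" "y \<notin> X closure_of U"
    using separating_family by blast
  show False
  proof (cases "U \<in> p")
    case True
    then show False using assms(2) U unfolding coded_points_def by blast
  next
    case False
    then show False using assms(1) U unfolding coded_points_def by blast
  qed
qed

lemma in_coded_points_code: "x \<in> topspace X \<Longrightarrow> x \<in> coded_points (code x)"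
  unfolding coded_points_def code_def
  using closure_of_subset[OF family_subset_topspace] by auto

lemma closedin_coding_relation:
  "closedin (prod_topology membership_topology X) {(p, x). x \<in> coded_points p}"
proof -
  define R where "R U = ({p. U \<notin> p} \<times> topspace X \<union> UNIV \<times> X closure_of U) \<inter>
                         ({p. U \<in> p} \<times> topspace X \<union> UNIV \<times> (topspace X - U))" for U
  have eq: "{(p, x). x \<in> coded_points p} = \<Inter>(insert (UNIV \<times> topspace X) (R ` \<U>))"
    unfolding coded_points_def R_def using closure_of_subset_topspace[of X] by auto
  have "closedin (prod_topology membership_topology X) (R U)" if U: "U \<in> \<U>" for U
    unfolding R_def using openin_family[OF U] closedin_topspace[of membership_topology]
    by (intro closedin_Int closedin_Un)
       (auto simp: closedin_prod_Times_iff closedin_membership_topology_cylinder)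
  moreover have "closedin (prod_topology membership_topology X) (UNIV \<times> topspace X)"
    using closedin_topspace[of "prod_topology membership_topology X"] by simp
  ultimately have "closedin (prod_topology membership_topology X) (\<Inter>(insert (UNIV \<times> topspace X) (R ` \<U>)))"
    by (intro closedin_Inter) auto
  then show ?thesis unfolding eq .
qed

lemma coded_points_nonempty:
  assumes "p \<in> code_space" shows "coded_points p \<noteq> {}"
proof -
  have "closedin membership_topology (fst ` {(p, x). x \<in> coded_points p})"
    using closed_map_fst[OF compact] closedin_coding_relation unfolding closed_map_def by blast
  moreover have "code ` boundary_free_points \<subseteq> fst ` {(p, x). x \<in> coded_points p}"
  proof
    fix p assume "p \<in> code ` boundary_free_points"
    then obtain x where "x \<in> boundary_free_points" "p = code x" by blast
    then have "(p, x) \<in> {(p, x). x \<in> coded_points p}"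
      using in_coded_points_code boundary_free_points_subset by blast
    then show "p \<in> fst ` {(p, x). x \<in> coded_points p}" by force
  qed
  ultimately have "code_space \<subseteq> fst ` {(p, x). x \<in> coded_points p}"
    unfolding code_space_def by (rule closure_of_minimal[rotated])
  then show ?thesis using assms by force
qed

definition decode :: "'a set set \<Rightarrow> 'a" where
  "decode p = (THE x. x \<in> coded_points p)"

lemma decode_eqI: "x \<in> coded_points p \<Longrightarrow> decode p = x"
  unfolding decode_def using coded_points_subsingleton by blast

lemma decode_in_coded_points: "p \<in> code_space \<Longrightarrow> decode p \<in> coded_points p"
  using coded_points_nonempty decode_eqI by blast

lemma decode_in_topspace: "p \<in> code_space \<Longrightarrow> decode p \<in> topspace X"
  using decode_in_coded_points unfolding coded_points_def by blast

lemma decode_code: "x \<in> topspace X \<Longrightarrow> decode (code x) = x"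
  using in_coded_points_code decode_eqI by blast

lemma continuous_map_decode: "continuous_map code_topology X decode"
proof (rule continuous_map_closed_graph[OF compact])
  show "decode \<in> topspace code_topology \<rightarrow> topspace X"
    using decode_in_topspace by simp
  have "(\<lambda>p. (p, decode p)) ` code_space = {(p, x). x \<in> coded_points p} \<inter> code_space \<times> topspace X"
    using decode_in_coded_points decode_in_topspace decode_eqI by force
  then show "closedin (prod_topology code_topology X) ((\<lambda>p. (p, decode p)) ` topspace code_topology)"
    unfolding topspace_code_topology unfolding code_topology_def prod_topology_subtopology(1)
    using closedin_coding_relation by (simp add: closedin_subtopology_Int_closed Int_commute)
qed

lemma decode_image: "decode ` code_space = topspace X"
proof
  show "decode ` code_space \<subseteq> topspace X"
    using decode_in_topspace by blast
  have "compactin X (decode ` code_space)"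
    using image_compactin[OF compact_space_code_topology[unfolded compact_space_def] continuous_map_decode]
    by simp
  then have "closedin X (decode ` code_space)"
    by (rule compactin_imp_closedin[OF Hausdorff])
  moreover have "boundary_free_points \<subseteq> decode ` code_space"
  proof
    fix x assume "x \<in> boundary_free_points"
    then have "code x \<in> code_space" "decode (code x) = x"
      using code_boundary_free_in_code_space decode_code boundary_free_points_subset by blast+
    then show "x \<in> decode ` code_space" by force
  qed
  ultimately have "X closure_of boundary_free_points \<subseteq> decode ` code_space"
    by (rule closure_of_minimal[rotated])
  then show "topspace X \<subseteq> decode ` code_space"
    using closure_of_boundary_free_points by simp
qed

lemma decode_fibre_code_boundary_free:
  assumes x: "x \<in> boundary_free_points"
  shows "{q \<in> code_space. decode q = decode (code x)} = {code x}"
proof -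
  have xX: "x \<in> topspace X" using x boundary_free_points_subset by blast
  have unique: "q = code x" if q: "q \<in> code_space" "decode q = x" for q
  proof -
    have xq: "x \<in> coded_points q"
      using decode_in_coded_points[OF q(1)] q(2) by simp
    have iff: "U \<in> q \<longleftrightarrow> U \<in> code x" if U: "U \<in> \<U>" for U
    proof -
      have "(U \<in> q \<longrightarrow> x \<in> X closure_of U) \<and> (U \<notin> q \<longrightarrow> x \<notin> U)"
        using xq U unfolding coded_points_def by auto
      moreover have "x \<in> U \<or> x \<notin> X closure_of U"
        using x U unfolding boundary_free_points_def by auto
      ultimately show ?thesis
        using U closure_of_subset[OF family_subset_topspace[OF U]] unfolding code_def by auto
    qed
    show "q = code x"
    proof (rule set_eqI)
      fix U
      show "U \<in> q \<longleftrightarrow> U \<in> code x"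
        using iff[of U] code_space_subset_family[OF q(1)] unfolding code_def by blast
    qed
  qed
  show ?thesis
  proof (intro equalityI subsetI)
    fix q assume "q \<in> {q \<in> code_space. decode q = decode (code x)}"
    then show "q \<in> {code x}"
      using unique decode_code[OF xX] by simp
  next
    fix q assume "q \<in> {code x}"
    then show "q \<in> {q \<in> code_space. decode q = decode (code x)}"
      using code_boundary_free_in_code_space[OF x] by simp
  qed
qed

lemma closure_of_injectivity_points:
  "code_topology closure_of {p \<in> code_space. {q \<in> code_space. decode q = decode p} = {p}} = code_space"
proof
  show "code_topology closure_of {p \<in> code_space. {q \<in> code_space. decode q = decode p} = {p}} \<subseteq> code_space"
    using closure_of_subset_topspace[of code_topology] by simp
  have "code ` boundary_free_points \<subseteq> {p \<in> code_space. {q \<in> code_space. decode q = decode p} = {p}}"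
    using decode_fibre_code_boundary_free code_boundary_free_in_code_space by blast
  from closure_of_mono[OF this, of code_topology]
  show "code_space \<subseteq> code_topology closure_of {p \<in> code_space. {q \<in> code_space. decode q = decode p} = {p}}"
    unfolding closure_of_code_boundary_free_points .
qed

lemma no_isolated_points_code_topology:
  assumes perfect: "\<And>x. x \<in> topspace X \<Longrightarrow> \<not> openin X {x}" and p: "p \<in> code_space"
  shows "\<not> openin code_topology {p}"
proof
  assume "openin code_topology {p}"
  then obtain N where N: "openin membership_topology N" "{p} = N \<inter> code_space"
    unfolding code_topology_def openin_subtopology by blast
  have "p \<in> membership_topology closure_of (code ` boundary_free_points)"
    using p unfolding code_space_def .
  then obtain x where x: "x \<in> boundary_free_points" "code x \<in> N"
    using N unfolding in_closure_of by blast
  have "openin (subtopology X boundary_free_points)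
      {y \<in> topspace (subtopology X boundary_free_points). code y \<in> N}"
    by (rule openin_continuous_map_preimage[OF continuous_map_code_boundary_free_points N(1)])
  then obtain W where W: "openin X W" "{y \<in> boundary_free_points. code y \<in> N} = W \<inter> boundary_free_points"
    using boundary_free_points_subset unfolding openin_subtopology by (auto simp: Int_absorb1)
  have "{y \<in> boundary_free_points. code y \<in> N} = {x}"
  proof (intro equalityI subsetI)
    fix y assume y: "y \<in> {y \<in> boundary_free_points. code y \<in> N}"
    then have "code y = code x"
      using x N code_boundary_free_in_code_space by blast
    then show "y \<in> {x}"
      using inj_on_code y x boundary_free_points_subset unfolding inj_on_def by blast
  qed (use x in simp)
  then have Wx: "W \<inter> boundary_free_points = {x}" using W(2) by simp
  have xW: "x \<in> W" and xX: "x \<in> topspace X" using Wx boundary_free_points_subset by blast+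
  have "W \<noteq> {x}" using perfect[OF xX] W(1) by blast
  then have "W - {x} \<noteq> {}" using xW by blast
  moreover have "openin X (W - {x})"
    using W(1) closedin_t1_singleton[OF Hausdorff_imp_t1_space[OF Hausdorff] xX] by (rule openin_diff)
  ultimately have "boundary_free_points \<inter> (W - {x}) \<noteq> {}"
    using closure_of_boundary_free_points unfolding dense_intersects_open by blast
  then show False using Wx by blast
qed

end

locale equivariant_coding = separating_coding +
  fixes f g :: "'a \<Rightarrow> 'a"
  assumes homeomorphic: "homeomorphic_maps X X f g"
    and image_f_family: "\<And>U. U \<in> \<U> \<Longrightarrow> f ` U \<in> \<U>"
    and image_g_family: "\<And>U. U \<in> \<U> \<Longrightarrow> g ` U \<in> \<U>"
begin

lemma equivariant_coding_inverse: "equivariant_coding X \<U> g f"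
proof (rule equivariant_coding.intro[OF separating_coding_axioms equivariant_coding_axioms.intro])
  show "homeomorphic_maps X X g f"
    using homeomorphic homeomorphic_maps_sym by blast
qed (fact image_g_family, fact image_f_family)

lemma mem_family_iff:
  assumes "x \<in> topspace X" and "U \<in> \<U>"
  shows "f x \<in> U \<longleftrightarrow> x \<in> g ` U" and "f x \<in> X closure_of U \<longleftrightarrow> x \<in> X closure_of (g ` U)"
  by (rule homeomorphic_maps_mem_image_iff[OF homeomorphic assms(1) family_subset_topspace[OF assms(2)]],
      rule homeomorphic_maps_mem_closure_of_iff[OF homeomorphic assms(1) family_subset_topspace[OF assms(2)]])

lemma image_in_topspace: "x \<in> topspace X \<Longrightarrow> f x \<in> topspace X"
  using homeomorphic continuous_map_image_subset_topspace unfolding homeomorphic_maps_def by blast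

definition shift :: "'a set set \<Rightarrow> 'a set set" where
  "shift p = {U \<in> \<U>. g ` U \<in> p}"

lemma code_image:
  assumes "x \<in> topspace X" shows "code (f x) = shift (code x)"
proof (rule set_eqI)
  fix U
  show "U \<in> code (f x) \<longleftrightarrow> U \<in> shift (code x)"
    using mem_family_iff(1)[OF assms, of U] image_g_family[of U] unfolding code_def shift_def by blast
qed

lemma image_boundary_free_points:
  assumes "x \<in> boundary_free_points" shows "f x \<in> boundary_free_points"
proof -
  have x: "x \<in> topspace X" using assms boundary_free_points_subset by blast
  have "f x \<in> U \<or> f x \<notin> X closure_of U" if U: "U \<in> \<U>" for U
    using assms image_g_family[OF U] mem_family_iff[OF x U] unfolding boundary_free_points_def by blast
  then show ?thesis
    unfolding boundary_free_points_def using image_in_topspace[OF x] by blast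
qed

lemma shift_inverse: "p \<subseteq> \<U> \<Longrightarrow> {U \<in> \<U>. f ` U \<in> shift p} = p"
proof -
  assume "p \<subseteq> \<U>"
  moreover have "g ` f ` U = U" if "U \<in> \<U>" for U
    using homeomorphic family_subset_topspace[OF that] unfolding homeomorphic_maps_def
    by (force simp: image_comp)
  ultimately show ?thesis
    unfolding shift_def using image_f_family by auto
qed

lemma continuous_map_shift: "continuous_map membership_topology membership_topology shift"
proof (rule continuous_map_into_membership_topology)
  fix U
  have "{p \<in> topspace membership_topology. U \<in> shift p} = (if U \<in> \<U> then {p. g ` U \<in> p} else {})"
    "{p \<in> topspace membership_topology. U \<notin> shift p} =
      (if U \<in> \<U> then {p. g ` U \<notin> p} else topspace membership_topology)"
    unfolding shift_def by auto
  then show "openin membership_topology {p \<in> topspace membership_topology. U \<in> shift p}"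
    "openin membership_topology {p \<in> topspace membership_topology. U \<notin> shift p}"
    by (simp_all add: openin_membership_topology_cylinder del: topspace_membership_topology)
qed

lemma shift_code_space: "p \<in> code_space \<Longrightarrow> shift p \<in> code_space"
proof -
  have "shift ` code_space \<subseteq> membership_topology closure_of (shift ` code ` boundary_free_points)"
    unfolding code_space_def by (rule continuous_map_image_closure_subset[OF continuous_map_shift])
  moreover have "shift ` code ` boundary_free_points \<subseteq> code ` boundary_free_points"
    using code_image image_boundary_free_points boundary_free_points_subset by (auto intro!: image_eqI)
  then have "membership_topology closure_of (shift ` code ` boundary_free_points) \<subseteq> code_space"
    unfolding code_space_def by (rule closure_of_mono)
  ultimately show "p \<in> code_space \<Longrightarrow> shift p \<in> code_space"
    by blast
qed

lemma decode_shift: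
  assumes "p \<in> code_space" shows "decode (shift p) = f (decode p)"
proof (rule decode_eqI)
  have p: "decode p \<in> coded_points p" and pX: "decode p \<in> topspace X"
    using decode_in_coded_points[OF assms] decode_in_topspace[OF assms] by blast+
  have "(U \<in> shift p \<longrightarrow> f (decode p) \<in> X closure_of U) \<and> (U \<notin> shift p \<longrightarrow> f (decode p) \<notin> U)"
    if U: "U \<in> \<U>" for U
    using p image_g_family[OF U] U mem_family_iff[OF pX U] unfolding coded_points_def shift_def by auto
  then show "f (decode p) \<in> coded_points (shift p)"
    unfolding coded_points_def using image_in_topspace[OF pX] by blast
qed

lemma homeomorphic_map_shift: "homeomorphic_map code_topology code_topology shift"
proof -
  interpret inverse: equivariant_coding X \<U> g f
    by (rule equivariant_coding_inverse)
  have "continuous_map code_topology code_topology shift"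
    unfolding code_topology_def using shift_code_space
    by (intro continuous_map_into_subtopology continuous_map_from_subtopology continuous_map_shift) auto
  moreover have "continuous_map code_topology code_topology inverse.shift"
    unfolding code_topology_def using inverse.shift_code_space
    by (intro continuous_map_into_subtopology continuous_map_from_subtopology inverse.continuous_map_shift) auto
  moreover have "inverse.shift (shift p) = p" "shift (inverse.shift p) = p" if "p \<in> code_space" for p
    using shift_inverse inverse.shift_inverse code_space_subset_family[OF that]
    unfolding inverse.shift_def shift_def by simp_all
  ultimately have "homeomorphic_maps code_topology code_topology shift inverse.shift"
    unfolding homeomorphic_maps_def by simp
  then show ?thesis
    using homeomorphic_maps_map by blast
qed

end

lemma islimpt_imp_not_openin_singleton:
  fixes Z :: "'a::t1_space set"
  assumes "z islimpt Z" shows "\<not> openin (top_of_set Z) {z}"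
  using infinite_openin[of Z "{z}" z] assms by auto

lemma equivariant_coding_of_compact:
  fixes Z :: "'a::metric_space set"
  assumes "compact Z" and hom: "homeomorphic_maps (top_of_set Z) (top_of_set Z) f g"
  obtains \<U> where "equivariant_coding (top_of_set Z) \<U> f g"
proof -
  obtain \<V> where \<V>: "countable \<V>" "\<And>V. V \<in> \<V> \<Longrightarrow> openin (top_of_set Z) V"
    "\<And>z w. \<lbrakk>z \<in> Z; w \<in> Z; z \<noteq> w\<rbrakk> \<Longrightarrow> \<exists>V\<in>\<V>. z \<in> V \<and> w \<notin> top_of_set Z closure_of V"
    using compact_separating_open_family[OF assms(1)] by blast
  obtain \<U> where \<U>: "countable \<U>" "\<V> \<subseteq> \<U>" "\<And>U. U \<in> \<U> \<Longrightarrow> openin (top_of_set Z) U"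
    "\<And>U. U \<in> \<U> \<Longrightarrow> f ` U \<in> \<U>" "\<And>U. U \<in> \<U> \<Longrightarrow> g ` U \<in> \<U>"
    using homeomorphic_maps_invariant_family[OF hom \<V>(1,2)] by blast
  have "equivariant_coding (top_of_set Z) \<U> f g"
  proof
    show "compact_space (top_of_set Z)"
      using assms(1) by (simp add: compact_space_subtopology)
    show "\<exists>U\<in>\<U>. x \<in> U \<and> y \<notin> top_of_set Z closure_of U"
      if "x \<in> topspace (top_of_set Z)" "y \<in> topspace (top_of_set Z)" "x \<noteq> y" for x y
      using \<V>(3)[of x y] \<U>(2) that by auto
  qed (fact \<U>(1), fact \<U>(3), fact hom, fact \<U>(4), fact \<U>(5))
  then show thesis by (rule that)
qed

theorem corollary2p24:
  fixes Z :: "'a::metric_space set" and \<psi> :: "'a \<Rightarrow> 'a"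
  assumes "compact Z" and "infinite Z"
    and "homeomorphic_map (top_of_set Z) (top_of_set Z) \<psi>"
    and "expansive Z \<psi>"
  shows "\<exists>(P :: 'a set set topology) \<sigma> \<pi>.
           compact_space P \<and> Hausdorff_space P \<and> P dim_le 0 \<and>
           homeomorphic_map P P \<sigma> \<and>
           continuous_map P (top_of_set Z) \<pi> \<and> \<pi> ` topspace P = Z \<and>
           (\<forall>p\<in>topspace P. \<pi> (\<sigma> p) = \<psi> (\<pi> p)) \<and>
           (let D = {p \<in> topspace P. {q \<in> topspace P. \<pi> q = \<pi> p} = {p}}
            in gdelta_in P D \<and> P closure_of D = topspace P) \<and>
           ((\<forall>z\<in>Z. z islimpt Z) \<longrightarrow> P homeomorphic_space cantor_space)"
proof -
  obtain \<psi>' where hom: "homeomorphic_maps (top_of_set Z) (top_of_set Z) \<psi> \<psi>'"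
    using assms(3) homeomorphic_map_maps by blast
  obtain \<U> where "equivariant_coding (top_of_set Z) \<U> \<psi> \<psi>'"
    using equivariant_coding_of_compact[OF assms(1) hom] by blast
  then interpret equivariant_coding "top_of_set Z" \<U> \<psi> \<psi>' .
  note sep = separating_clopens_cylinders
  show ?thesis
  proof (intro exI[of _ code_topology] exI[of _ shift] exI[of _ decode] conjI impI)
    show "Hausdorff_space code_topology"
      by (rule Hausdorff_space_if_separating_clopens[OF sep])
    show "code_topology dim_le 0"
      by (rule dim_le_0_if_separating_clopens[OF compact_space_code_topology sep])
    show "decode ` topspace code_topology = Z"
      using decode_image by simp
    show "\<forall>p\<in>topspace code_topology. decode (shift p) = \<psi> (decode p)"
      using decode_shift by simp
    show "let D = {p \<in> topspace code_topology. {q \<in> topspace code_topology. decode q = decode p} = {p}}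
          in gdelta_in code_topology D \<and> code_topology closure_of D = topspace code_topology"
      using gdelta_in_injectivity_points[OF compact_space_code_topology Hausdorff continuous_map_decode
          countable_cylinders sep] closure_of_injectivity_points
      by (simp add: Let_def)
    show "code_topology homeomorphic_space cantor_space" if perfect: "\<forall>z\<in>Z. z islimpt Z"
    proof (rule homeomorphic_cantor_space_if_perfect[OF compact_space_code_topology countable_cylinders sep])
      show "topspace code_topology \<noteq> {}"
        using decode_image assms(2) by force
      show "\<not> openin code_topology {p}" if "p \<in> topspace code_topology" for p
        using that perfect
        by (intro no_isolated_points_code_topology islimpt_imp_not_openin_singleton) auto
    qed
  qed (fact compact_space_code_topology, fact homeomorphic_map_shift, fact continuous_map_decode)
qed

end
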